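(* If a topological space $X$ is crowded and openly irresolvable, then every instance of the McKinsey scheme $\mathrm{M}:\ \Box\Diamond\varphi\to\Diamond\Box\varphi$ is $d$-valid in $X$.
   Context: $d$-semantics: a model on a space $X$ is a valuation of propositional variables by subsets of $X$; truth sets interpret Boolean connectives as set operations, $\Diamond\varphi$ as the derived set (set of limit points: $x$ such that every $O-\{x\}$, $O$ an open neighbourhood of $x$, meets the set) of the truth set of $\varphi$, and $\Box=\neg\Diamond\neg$. A formula is $d$-valid in $X$ if true at every point in every model on $X$. $X$ is crowded if it has no isolated points. A space is resolvable if it has two disjoint non-empty dense subsets, irresolvable otherwise; $X$ is openly irresolvable if every non-empty open subspace is irresolvable. *)

theory Defs
  imports "HOL-Analysis.Analysis"
begin

datatype 'v mform =
    MVar 'v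
  | MBot
  | MNeg "'v mform"
  | MAnd "'v mform" "'v mform"
  | MOr "'v mform" "'v mform"
  | MImp "'v mform" "'v mform"
  | MDia "'v mform"

definition MBox :: "'v mform \<Rightarrow> 'v mform" where
  "MBox \<phi> = MNeg (MDia (MNeg \<phi>))"

fun dtruth :: "'a topology \<Rightarrow> ('v \<Rightarrow> 'a set) \<Rightarrow> 'v mform \<Rightarrow> 'a set" where
  "dtruth X V (MVar p) = topspace X \<inter> V p"
| "dtruth X V MBot = {}"
| "dtruth X V (MNeg \<phi>) = topspace X - dtruth X V \<phi>"
| "dtruth X V (MAnd \<phi> \<psi>) = dtruth X V \<phi> \<inter> dtruth X V \<psi>"
| "dtruth X V (MOr \<phi> \<psi>) = dtruth X V \<phi> \<union> dtruth X V \<psi>"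
| "dtruth X V (MImp \<phi> \<psi>) = (topspace X - dtruth X V \<phi>) \<union> dtruth X V \<psi>"
| "dtruth X V (MDia \<phi>) = X derived_set_of (dtruth X V \<phi>)"

definition d_valid :: "'a topology \<Rightarrow> 'v mform \<Rightarrow> bool" where
  "d_valid X \<phi> \<longleftrightarrow> (\<forall>V. \<forall>x\<in>topspace X. x \<in> dtruth X V \<phi>)"

definition crowded :: "'a topology \<Rightarrow> bool" where
  "crowded X \<longleftrightarrow> (\<forall>x\<in>topspace X. \<not> openin X {x})"

definition resolvable :: "'a topology \<Rightarrow> bool" where
  "resolvable X \<longleftrightarrow> (\<exists>A B. A \<subseteq> topspace X \<and> B \<subseteq> topspace X \<and> A \<inter> B = {}
       \<and> A \<noteq> {} \<and> B \<noteq> {} \<and> X closure_of A = topspace X \<and> X closure_of B = topspace X)"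

definition openly_irresolvable :: "'a topology \<Rightarrow> bool" where
  "openly_irresolvable X \<longleftrightarrow>
     (\<forall>U. openin X U \<and> U \<noteq> {} \<longrightarrow> \<not> resolvable (subtopology X U))"

end

theory Submission
  imports Defs
begin

text \<open>
  Let \<open>A\<close> be the truth set of \<open>\<phi>\<close> and let \<open>x\<close> satisfy \<open>\<box>\<diamond>\<phi>\<close>, so some open
  \<open>U \<ni> x\<close> has \<open>U - {x} \<subseteq> d A\<close>. For an open \<open>W \<ni> x\<close> put \<open>Q = U \<inter> W\<close>. As \<open>X\<close>
  is crowded, \<open>Q - {x}\<close> is dense in \<open>Q\<close>, so \<open>A\<close> is dense in \<open>Q\<close>. If \<open>A\<close> had empty
  interior in \<open>Q\<close>, its complement would be dense in \<open>Q\<close> as well and \<open>Q\<close> would be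
  resolvable. Hence \<open>A\<close> contains a non-empty open \<open>G \<subseteq> Q\<close>; every point of \<open>G\<close>
  satisfies \<open>\<box>\<phi>\<close>, and \<open>G\<close> has such a point other than \<open>x\<close>, again because \<open>X\<close> is
  crowded. So \<open>x\<close> satisfies \<open>\<diamond>\<box>\<phi>\<close>.
\<close>

lemma crowded_openin_other_point:
  assumes "crowded X" "openin X G" "G \<noteq> {}"
  obtains y where "y \<in> G" "y \<noteq> x"
proof -
  have "G \<noteq> {x}"
    using assms openin_subset unfolding crowded_def by fastforce
  then show ?thesis
    using \<open>G \<noteq> {}\<close> that by blast
qed

lemma crowded_openin_subset_closure_of_delete:
  assumes "crowded X" "openin X U"
  shows "U \<subseteq> X closure_of (U - {x})"
proof
  fix z assume "z \<in> U"
  show "z \<in> X closure_of (U - {x})"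
    unfolding in_closure_of
  proof (intro conjI allI impI)
    show "z \<in> topspace X"
      using \<open>z \<in> U\<close> assms(2) openin_subset by blast
    fix N assume N: "z \<in> N \<and> openin X N"
    then have "openin X (N \<inter> U)" "N \<inter> U \<noteq> {}"
      using assms(2) \<open>z \<in> U\<close> by auto
    then obtain y where "y \<in> N \<inter> U" "y \<noteq> x"
      using crowded_openin_other_point assms(1) by metis
    then show "\<exists>y. y \<in> U - {x} \<and> y \<in> N"
      by blast
  qed
qed

lemma resolvable_subtopology_openin:
  assumes Q: "openin X Q" "Q \<noteq> {}"
    and dense: "Q \<subseteq> X closure_of A" "Q \<subseteq> X closure_of (topspace X - A)"
  shows "resolvable (subtopology X Q)"
proof -
  have top: "topspace (subtopology X Q) = Q"
    using openin_subset[OF Q(1)] by auto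
  have closure_Q: "subtopology X Q closure_of (Q \<inter> S) = Q" if "Q \<subseteq> X closure_of S" for S
  proof -
    have "Q \<subseteq> X closure_of (Q \<inter> S)"
      using that openin_Int_closure_of_subset[OF Q(1), of S] by blast
    moreover have "X closure_of (Q \<inter> S) \<subseteq> X closure_of S"
      by (simp add: closure_of_mono)
    ultimately show ?thesis
      using that by (auto simp: closure_of_subtopology_open[OF disjI1, OF Q(1)])
  qed
  have "Q \<inter> A \<noteq> {}" "Q \<inter> (topspace X - A) \<noteq> {}"
    using closure_Q[OF dense(1)] closure_Q[OF dense(2)] Q(2) by auto
  moreover have "(Q \<inter> A) \<inter> (Q \<inter> (topspace X - A)) = {}"
    by blast
  ultimately show ?thesis
    unfolding resolvable_def top
    using closure_Q[OF dense(1)] closure_Q[OF dense(2)]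
    by (intro exI[of _ "Q \<inter> A"] exI[of _ "Q \<inter> (topspace X - A)"] conjI) auto
qed

lemma openly_irresolvable_Int_interior_of_nonempty:
  assumes "openly_irresolvable X" "openin X Q" "Q \<noteq> {}" "Q \<subseteq> X closure_of A"
  shows "Q \<inter> X interior_of A \<noteq> {}"
proof
  assume "Q \<inter> X interior_of A = {}"
  then have "Q \<subseteq> X closure_of (topspace X - A)"
    using openin_subset[OF assms(2)] by (auto simp: closure_of_complement)
  then have "resolvable (subtopology X Q)"
    using resolvable_subtopology_openin assms(2-4) by blast
  then show False
    using assms(1-3) unfolding openly_irresolvable_def by blast
qed

lemma crowded_openly_irresolvable_interior_of_other_point:
  assumes cr: "crowded X" and oi: "openly_irresolvable X"
    and Q: "openin X Q" "x \<in> Q" and punctured: "Q - {x} \<subseteq> X derived_set_of A"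
  obtains y where "y \<in> Q \<inter> X interior_of A" "y \<noteq> x"
proof -
  have "Q \<subseteq> X closure_of (Q - {x})"
    using crowded_openin_subset_closure_of_delete[OF cr Q(1)] .
  also have "\<dots> \<subseteq> X closure_of (X derived_set_of A)"
    using punctured by (rule closure_of_mono)
  also have "\<dots> \<subseteq> X closure_of A"
    by (metis closure_of_closure_of closure_of_mono derived_set_of_subset_closure_of)
  finally have "Q \<inter> X interior_of A \<noteq> {}"
    using openly_irresolvable_Int_interior_of_nonempty[OF oi Q(1)] Q(2) by blast
  moreover have "openin X (Q \<inter> X interior_of A)"
    using Q(1) by (simp add: openin_Int)
  ultimately show ?thesis
    using crowded_openin_other_point[OF cr] that by metis
qed

lemma crowded_openly_irresolvable_mckinsey:
  assumes cr: "crowded X" and oi: "openly_irresolvable X"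
  shows "topspace X - X derived_set_of (topspace X - X derived_set_of A)
           \<subseteq> X derived_set_of (topspace X - X derived_set_of (topspace X - A))"
proof
  fix x assume x: "x \<in> topspace X - X derived_set_of (topspace X - X derived_set_of A)"
  then have "\<not> (\<forall>U. x \<in> U \<and> openin X U \<longrightarrow>
               (\<exists>y. y \<noteq> x \<and> y \<in> topspace X - X derived_set_of A \<and> y \<in> U))"
    by (simp add: in_derived_set_of)
  then obtain U where U: "openin X U" "x \<in> U"
    and avoids: "\<And>y. y \<noteq> x \<Longrightarrow> y \<in> U \<Longrightarrow> y \<notin> topspace X - X derived_set_of A"
    by blast
  show "x \<in> X derived_set_of (topspace X - X derived_set_of (topspace X - A))"
    unfolding in_derived_set_of
  proof (intro conjI allI impI)
    show "x \<in> topspace X"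
      using x by blast
    fix W assume W: "x \<in> W \<and> openin X W"
    have "U \<inter> W - {x} \<subseteq> X derived_set_of A"
      using avoids openin_subset[OF U(1)] by blast
    then obtain y where y: "y \<in> U \<inter> W \<inter> X interior_of A" "y \<noteq> x"
      using crowded_openly_irresolvable_interior_of_other_point[OF cr oi, of "U \<inter> W" x A] U W
      by blast
    have "y \<notin> X closure_of (topspace X - A)"
      using y by (simp add: closure_of_complement)
    then have "y \<notin> X derived_set_of (topspace X - A)"
      using derived_set_of_subset_closure_of by fastforce
    moreover have "y \<in> topspace X" "y \<in> W"
      using y interior_of_subset_topspace[of X A] by auto
    ultimately show "\<exists>y. y \<noteq> x \<and> y \<in> topspace X - X derived_set_of (topspace X - A) \<and> y \<in> W"
      using y(2) by blast
  qed
qed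

theorem theorem9:
  fixes X :: "'a topology" and \<phi> :: "'v mform"
  assumes "crowded X" and "openly_irresolvable X"
  shows "d_valid X (MImp (MBox (MDia \<phi>)) (MDia (MBox \<phi>)))"
  using crowded_openly_irresolvable_mckinsey[OF assms]
  by (auto simp: d_valid_def MBox_def)

end
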